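(* Let $H$ be a valid history. Then $H$ is locally opaque if and only if for every sub-history $sh \in \mathrm{shSet}(H)$ there exists a version order $\ll_{sh}$ such that the opacity graph $\mathrm{OPG}(sh, \ll_{sh})$ is acyclic.
   Context: Setting: transactions access transactional objects (t-objects) via operations read $r_k(x,v)$ (or $r_k(x,\mathcal{A})$ if it aborts), write $w_k(x,v)$, commit $c_k$ and abort $a_k$. A (sequential) history $H$ is a sequence of such events, each operation treated atomically; it is well-formed and contains an initial committed transaction $T_0$ writing $0$ to every t-object; written values are assumed unique. $\mathrm{txns}(H)$, $\mathrm{committed}(H)$, $\mathrm{aborted}(H)$, $\mathrm{live}(H)$ denote the transactions, committed, aborted and live (incomplete) ones. The completion $\overline{H}$ is obtained by appending an abort immediately after the last event of every live transaction. Real-time order: $T_k \prec^{RT}_H T_m$ if $T_k$ is complete and its last event precedes the first event of $T_m$. A sub-history of $H$ is formed by a subset of its transactions together with all their events, in the order of $H$. A successful read $r_k(x,v)$ is valid if some $T_j$ with $w_j(x,v)$ committed before it; $H$ is valid if all its successful reads are. A successful read $r_k(x,v)$ is legal if the transaction owning the latest commit event preceding it among transactions writing $x$ wrote $v$ to $x$; $H$ is legal if all successful reads are legal. $H$ is t-sequential if its transactions do not overlap. $H$ is opaque if it is valid and there is a legal t-sequential history $S$ with the same events as $\overline{H}$ such that $\prec^{RT}_H \subseteq \prec^{RT}_S$. $\mathrm{shSet}(H)$: (1) for each aborted transaction $T_i$, the sub-history consisting of all operations of the transactions committed before (the relevant event of) $T_i$ together with all successful operations of $T_i$, with a commit of $T_i$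 placed immediately after its last successful operation; (2) for the last committed transaction $T_l$, the sub-history of all committed transactions up to and including $T_l$. $H$ is locally opaque if every sub-history in $\mathrm{shSet}(H)$ is opaque. Version order: for a history $H$ and t-object $x$, any total order on the versions of $x$ created by committed transactions of $H$ ($T_i$ writing $x$ creates version $x_i$); $\ll$ is the union over all t-objects. Opacity graph $\mathrm{OPG}(H,\ll)$: one vertex per transaction of $\overline{H}$; edges: (real-time) $T_i \to T_j$ if $T_i$ commits before $T_j$ starts; (reads-from) $T_i\to T_j$ if $T_j$ reads $x$ from $T_i$; (multiversion) whenever $r_k(x,v)$ reads from $w_j(x,v)$ and a committed $T_i$ writes $x$ with a different value, add $T_i\to T_j$ if $x_i \ll x_j$ and $T_k \to T_i$ if $x_j \ll x_i$. *)

theory Defs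
  imports Main
begin

text \<open>Transactions are identified by natural numbers, T_0 being the initial transaction.
  A read returning a value v is  Read k x (Some v); an aborted read r_k(x,A) is Read k x None.\<close>

datatype ('o, 'v) event =
    Read nat 'o "'v option"
  | Write nat 'o 'v
  | Commit nat
  | Abort nat

fun tid :: "('o, 'v) event \<Rightarrow> nat" where
  "tid (Read k _ _) = k"
| "tid (Write k _ _) = k"
| "tid (Commit k) = k"
| "tid (Abort k) = k"

type_synonym ('o, 'v) history = "('o, 'v) event list"

fun terminal :: "('o, 'v) event \<Rightarrow> bool" where
  "terminal (Commit _) = True"
| "terminal (Abort _) = True"
| "terminal (Read _ _ None) = True"
| "terminal _ = False"

fun aborting :: "('o, 'v) event \<Rightarrow> bool" where
  "aborting (Abort _) = True"
| "aborting (Read _ _ None) = True"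
| "aborting _ = False"

fun successful_op :: "('o, 'v) event \<Rightarrow> bool" where
  "successful_op (Write _ _ _) = True"
| "successful_op (Read _ _ (Some _)) = True"
| "successful_op _ = False"

definition txns :: "('o, 'v) history \<Rightarrow> nat set" where
  "txns H = tid ` set H"

definition committed :: "('o, 'v) history \<Rightarrow> nat set" where
  "committed H = {k. Commit k \<in> set H}"

definition aborted :: "('o, 'v) history \<Rightarrow> nat set" where
  "aborted H = {k. \<exists>e\<in>set H. aborting e \<and> tid e = k}"

definition live :: "('o, 'v) history \<Rightarrow> nat set" where
  "live H = txns H - committed H - aborted H"

definition complete_txns :: "('o, 'v) history \<Rightarrow> nat set" where
  "complete_txns H = committed H \<union> aborted H"

definition well_formed :: "('o, 'v) history \<Rightarrow> bool" where
  "well_formed H \<longleftrightarrow>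
     (\<forall>i<length H. \<forall>j<length H. i < j \<longrightarrow> terminal (H ! i) \<longrightarrow> tid (H ! j) \<noteq> tid (H ! i))"

text \<open>The history starts with the initial committed transaction T_0 that writes 0 to every
  t-object (t-objects are the elements of the finite type 'o); T_0 has no other events.\<close>
definition has_init :: "('o::finite, 'v::zero) history \<Rightarrow> bool" where
  "has_init H \<longleftrightarrow> (\<exists>p rest. H = p @ [Commit 0] @ rest \<and> distinct p \<and>
      set p = {Write 0 x 0 | x. True} \<and> (\<forall>e\<in>set rest. tid e \<noteq> 0))"

definition unique_writes :: "('o, 'v) history \<Rightarrow> bool" where
  "unique_writes H \<longleftrightarrow> (\<forall>i<length H. \<forall>j<length H. \<forall>k k' x v.
      H ! i = Write k x v \<longrightarrow> H ! j = Write k' x v \<longrightarrow> i = j)"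

definition is_history :: "('o::finite, 'v::zero) history \<Rightarrow> bool" where
  "is_history H \<longleftrightarrow> well_formed H \<and> has_init H \<and> unique_writes H"

definition last_event_of :: "('o, 'v) history \<Rightarrow> nat \<Rightarrow> bool" where
  "last_event_of H i \<longleftrightarrow> (\<forall>j. i < j \<and> j < length H \<longrightarrow> tid (H ! j) \<noteq> tid (H ! i))"

definition completion :: "('o, 'v) history \<Rightarrow> ('o, 'v) history" where
  "completion H = concat (map (\<lambda>i. H ! i #
      (if tid (H ! i) \<in> live H \<and> last_event_of H i then [Abort (tid (H ! i))] else []))
      [0..<length H])"

definition rt :: "('o, 'v) history \<Rightarrow> nat \<Rightarrow> nat \<Rightarrow> bool" where
  "rt H k m \<longleftrightarrow> k \<in> complete_txns H \<and> m \<in> txns H \<and>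
     (\<forall>i<length H. \<forall>j<length H. tid (H ! i) = k \<longrightarrow> tid (H ! j) = m \<longrightarrow> i < j)"

definition subhistory :: "nat set \<Rightarrow> ('o, 'v) history \<Rightarrow> ('o, 'v) history" where
  "subhistory T H = filter (\<lambda>e. tid e \<in> T) H"

definition valid_read :: "('o, 'v) history \<Rightarrow> nat \<Rightarrow> bool" where
  "valid_read H i \<longleftrightarrow> (\<forall>k x v. H ! i = Read k x (Some v) \<longrightarrow>
      (\<exists>j<i. \<exists>t. H ! j = Commit t \<and> Write t x v \<in> set H))"

definition valid :: "('o, 'v) history \<Rightarrow> bool" where
  "valid H \<longleftrightarrow> (\<forall>i<length H. valid_read H i)"

definition writes_obj :: "('o, 'v) history \<Rightarrow> nat \<Rightarrow> 'o \<Rightarrow> bool" where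
  "writes_obj H t x \<longleftrightarrow> (\<exists>w. Write t x w \<in> set H)"

definition legal_read :: "('o, 'v) history \<Rightarrow> nat \<Rightarrow> bool" where
  "legal_read H i \<longleftrightarrow> (\<forall>k x v. H ! i = Read k x (Some v) \<longrightarrow>
      (\<exists>j<i. \<exists>t. H ! j = Commit t \<and> writes_obj H t x \<and> Write t x v \<in> set H \<and>
         (\<forall>j'. j < j' \<and> j' < i \<longrightarrow> \<not> (\<exists>t'. H ! j' = Commit t' \<and> writes_obj H t' x))))"

definition legal :: "('o, 'v) history \<Rightarrow> bool" where
  "legal H \<longleftrightarrow> (\<forall>i<length H. legal_read H i)"

definition t_sequential :: "('o, 'v) history \<Rightarrow> bool" where
  "t_sequential H \<longleftrightarrow> (\<forall>i j k. i < j \<and> j < k \<and> k < length H \<and> tid (H ! i) = tid (H ! k)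
      \<longrightarrow> tid (H ! j) = tid (H ! i))"

definition equivalent :: "('o, 'v) history \<Rightarrow> ('o, 'v) history \<Rightarrow> bool" where
  "equivalent S H \<longleftrightarrow> (\<forall>k. filter (\<lambda>e. tid e = k) S = filter (\<lambda>e. tid e = k) H)"

definition opaque :: "('o, 'v) history \<Rightarrow> bool" where
  "opaque H \<longleftrightarrow> valid H \<and> (\<exists>S. legal S \<and> t_sequential S \<and> equivalent S (completion H) \<and>
      (\<forall>k m. rt H k m \<longrightarrow> rt S k m))"

definition idx_of_abort :: "('o, 'v) history \<Rightarrow> nat \<Rightarrow> nat" where
  "idx_of_abort H t = (LEAST p. p < length H \<and> aborting (H ! p) \<and> tid (H ! p) = t)"

definition commit_idx_before :: "('o, 'v) history \<Rightarrow> nat \<Rightarrow> nat set" where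
  "commit_idx_before H p = {k. \<exists>j<p. H ! j = Commit k}"

definition last_succ_op :: "('o, 'v) history \<Rightarrow> nat \<Rightarrow> nat \<Rightarrow> bool" where
  "last_succ_op H t n \<longleftrightarrow> n < length H \<and> tid (H ! n) = t \<and> successful_op (H ! n) \<and>
     (\<forall>m. n < m \<and> m < length H \<longrightarrow> \<not> (tid (H ! m) = t \<and> successful_op (H ! m)))"

text \<open>Sub-history for an aborted transaction T_t: all events of transactions that committed before
  the aborting event of T_t, plus the successful operations of T_t, with c_t placed immediately
  after the last successful operation of T_t.\<close>
definition sh_aborted :: "('o, 'v) history \<Rightarrow> nat \<Rightarrow> ('o, 'v) history" where
  "sh_aborted H t = concat (map (\<lambda>n.
      (if tid (H ! n) \<in> commit_idx_before H (idx_of_abort H t)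
          \<or> (tid (H ! n) = t \<and> successful_op (H ! n)) then [H ! n] else [])
      @ (if last_succ_op H t n then [Commit t] else []))
      [0..<length H])"

definition sh_committed :: "('o, 'v) history \<Rightarrow> ('o, 'v) history" where
  "sh_committed H = subhistory (committed H) H"

definition shSet :: "('o, 'v) history \<Rightarrow> ('o, 'v) history set" where
  "shSet H = {sh_aborted H t | t. t \<in> aborted H} \<union> {sh_committed H}"

definition locally_opaque :: "('o, 'v) history \<Rightarrow> bool" where
  "locally_opaque H \<longleftrightarrow> (\<forall>sh\<in>shSet H. opaque sh)"

text \<open>Versions of x: committed transactions writing x (T_i creates version x_i).\<close>
definition versions :: "('o, 'v) history \<Rightarrow> 'o \<Rightarrow> nat set" where
  "versions H x = {i. i \<in> committed H \<and> writes_obj H i x}"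

definition version_order :: "('o, 'v) history \<Rightarrow> (('o \<times> nat) \<times> ('o \<times> nat)) set \<Rightarrow> bool" where
  "version_order H vo \<longleftrightarrow>
     vo \<subseteq> {((x, i), (y, j)). x = y \<and> i \<in> versions H x \<and> j \<in> versions H x} \<and>
     (\<forall>x. strict_linear_order_on (versions H x) {(i, j). ((x, i), (x, j)) \<in> vo})"

definition reads_from :: "('o, 'v) history \<Rightarrow> nat \<Rightarrow> nat \<Rightarrow> 'o \<Rightarrow> bool" where
  "reads_from H j k x \<longleftrightarrow> (\<exists>v. Read k x (Some v) \<in> set H \<and> Write j x v \<in> set H)"

definition commits_before_start :: "('o, 'v) history \<Rightarrow> nat \<Rightarrow> nat \<Rightarrow> bool" where
  "commits_before_start H i j \<longleftrightarrow> j \<in> txns H \<and>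
     (\<exists>c<length H. H ! c = Commit i \<and> (\<forall>n<length H. tid (H ! n) = j \<longrightarrow> c < n))"

definition opg :: "('o, 'v) history \<Rightarrow> (('o \<times> nat) \<times> ('o \<times> nat)) set \<Rightarrow> (nat \<times> nat) set" where
  "opg H vo =
     {(i, j). commits_before_start H i j}
   \<union> {(i, j). \<exists>x. reads_from H i j x}
   \<union> {(i, j). \<exists>k x v v'. Read k x (Some v) \<in> set H \<and> Write j x v \<in> set H \<and>
         i \<in> committed H \<and> Write i x v' \<in> set H \<and> v' \<noteq> v \<and> i \<noteq> j \<and> i \<noteq> k \<and>
         ((x, i), (x, j)) \<in> vo}
   \<union> {(k, i). \<exists>j x v v'. Read k x (Some v) \<in> set H \<and> Write j x v \<in> set H \<and>
         i \<in> committed H \<and> Write i x v' \<in> set H \<and> v' \<noteq> v \<and> i \<noteq> j \<and> i \<noteq> k \<and>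
         ((x, j), (x, i)) \<in> vo}"

end

theory Submission
  imports Defs "HOL-Library.Product_Lexorder"
begin

(* Every sub-history in shSet H is commit-terminated (each of its transactions commits exactly
   once, as its last event), has unique writers and is valid, so it suffices to show that such a
   history G is opaque iff OPG(G, vo) is acyclic for some version order vo.
   If S is a serialization witnessing opacity, ordering versions by the position of their commit
   in S gives a version order for which every edge of the opacity graph goes forward in S.
   Conversely, if OPG(G, vo) is acyclic, sorting the events of G stably by the number of
   opg-predecessors of their transaction (ties broken by the transaction identifier) yields a
   t-sequential history respecting all edges; legality follows because a commit of a writer of x
   between the source of a read and the read would create a multiversion edge pointing backwards. *)

lemma sorted_map_nth_less_imp_less:
  fixes f :: "'a \<Rightarrow> 'b::linorder"
  assumes "sorted (map f xs)" "i < length xs" "f (xs ! i) < f (xs ! j)"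
  shows "i < j"
proof (rule ccontr)
  assume "\<not> i < j"
  then have "f (xs ! j) \<le> f (xs ! i)"
    using sorted_nth_mono[OF assms(1), of j i] assms(2) by simp
  with assms(3) show False by simp
qed

lemma filter_eq_append_ConsD:
  "filter P G = A' @ r # B' \<Longrightarrow> \<exists>A B. G = A @ r # B \<and> filter P A = A' \<and> P r"
proof (induction A' arbitrary: G)
  case Nil
  then obtain us vs where "G = us @ r # vs" "\<forall>u\<in>set us. \<not> P u" "P r"
    by (auto dest: filter_eq_ConsD)
  then have "G = us @ r # vs \<and> filter P us = [] \<and> P r" by (simp add: filter_empty_conv)
  then show ?case by blast
next
  case (Cons a A')
  then obtain us vs where uv: "G = us @ a # vs" "\<forall>u\<in>set us. \<not> P u" "P a"
      "filter P vs = A' @ r # B'"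
    by (auto dest: filter_eq_ConsD)
  with Cons.IH obtain A B where "vs = A @ r # B" "filter P A = A'" "P r" by blast
  with uv have "G = (us @ a # A) @ r # B \<and> filter P (us @ a # A) = a # A' \<and> P r"
    by (simp add: filter_empty_conv)
  then show ?case by blast
qed

lemma map_nth_upt_take: "i \<le> length xs \<Longrightarrow> map (nth xs) [0..<i] = take i xs"
  by (rule nth_equalityI) auto

lemma map_nth_upt_drop: "map (nth xs) [i..<length xs] = drop i xs"
  by (rule nth_equalityI) auto

lemma concat_map_nth: "concat (map (\<lambda>n. f (xs ! n)) [0..<length xs]) = concat (map f xs)"
proof -
  have "map (\<lambda>n. f (xs ! n)) [0..<length xs] = map f (map (nth xs) [0..<length xs])" by simp
  then show ?thesis by (simp only: map_nth)
qed

lemma concat_map_nth_insert: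
  assumes "m < length xs"
  shows "concat (map (\<lambda>n. f (xs ! n) @ (if n = m then [c] else [])) [0..<length xs]) =
    concat (map f (take (Suc m) xs)) @ c # concat (map f (drop (Suc m) xs))"
proof -
  have upt: "[0..<length xs] = [0..<m] @ m # [Suc m..<length xs]"
    using assms by (metis le_add_diff_inverse less_imp_le_nat upt_add_eq_append upt_conv_Cons zero_le)
  have "map (\<lambda>n. f (xs ! n) @ (if n = m then [c] else [])) [0..<m] = map f (map (nth xs) [0..<m])"
    by simp
  moreover have "map (\<lambda>n. f (xs ! n) @ (if n = m then [c] else [])) [Suc m..<length xs] =
      map f (map (nth xs) [Suc m..<length xs])"
    by simp
  ultimately show ?thesis
    using assms unfolding upt
    by (simp add: map_nth_upt_drop map_nth_upt_take take_Suc_conv_app_nth)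
qed

lemma concat_map_filter_singleton: "concat (map (\<lambda>x. if P x then [x] else []) xs) = filter P xs"
  by (induction xs) auto

lemma acyclic_if_monotone:
  fixes f :: "'a \<Rightarrow> 'b::linorder"
  assumes "\<And>a b. (a, b) \<in> R \<Longrightarrow> f a < f b"
  shows "acyclic R"
proof -
  have "f a < f b" if "(a, b) \<in> R\<^sup>+" for a b
    using that by (induction rule: trancl_induct) (auto dest: assms)
  then show ?thesis unfolding acyclic_def by blast
qed

lemma card_trancl_predecessors_less:
  assumes "finite T" "acyclic R" "(a, b) \<in> R" "a \<in> T"
  shows "card {c \<in> T. (c, a) \<in> R\<^sup>+} < card {c \<in> T. (c, b) \<in> R\<^sup>+}"
proof (rule psubset_card_mono)
  show "finite {c \<in> T. (c, b) \<in> R\<^sup>+}" using assms(1) by simp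
  have "a \<in> {c \<in> T. (c, b) \<in> R\<^sup>+}" "a \<notin> {c \<in> T. (c, a) \<in> R\<^sup>+}"
    using assms(2-4) unfolding acyclic_def by auto
  moreover have "{c \<in> T. (c, a) \<in> R\<^sup>+} \<subseteq> {c \<in> T. (c, b) \<in> R\<^sup>+}"
    using assms(3) by auto
  ultimately show "{c \<in> T. (c, a) \<in> R\<^sup>+} \<subset> {c \<in> T. (c, b) \<in> R\<^sup>+}" by blast
qed

section \<open>Commit-terminated histories\<close>

definition commit_terminated :: "('o, 'v) history \<Rightarrow> bool" where
  "commit_terminated G \<longleftrightarrow> (\<forall>k\<in>txns G. \<exists>ys.
     filter (\<lambda>e. tid e = k) G = ys @ [Commit k] \<and> Commit k \<notin> set ys)"

definition unique_writers :: "('o, 'v) history \<Rightarrow> bool" where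
  "unique_writers G \<longleftrightarrow> (\<forall>a b x v. Write a x v \<in> set G \<longrightarrow> Write b x v \<in> set G \<longrightarrow> a = b)"

lemma tid_in_txns: "e \<in> set G \<Longrightarrow> tid e \<in> txns G"
  unfolding txns_def by simp

lemma commit_terminated_split:
  assumes "commit_terminated G" "k \<in> txns G"
  obtains a b where "G = a @ Commit k # b" "Commit k \<notin> set a" "\<forall>e\<in>set b. tid e \<noteq> k"
proof -
  obtain ys where ys: "filter (\<lambda>e. tid e = k) G = ys @ [Commit k]" "Commit k \<notin> set ys"
    using assms unfolding commit_terminated_def by blast
  then have "filter (\<lambda>e. tid e = k) (rev G) = Commit k # rev ys"
    by (simp flip: rev_filter)
  then obtain us vs where uv: "rev G = us @ Commit k # vs" "\<forall>u\<in>set us. tid u \<noteq> k"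
      "rev ys = filter (\<lambda>e. tid e = k) vs"
    by (auto dest: filter_eq_ConsD)
  have "Commit k \<notin> set vs"
  proof
    assume "Commit k \<in> set vs"
    then have "Commit k \<in> set (rev ys)" using uv(3) by simp
    with ys(2) show False by simp
  qed
  moreover have "G = rev vs @ Commit k # rev us"
    using arg_cong[OF uv(1), of rev] by simp
  ultimately show thesis
    using uv(2) by (intro that[of "rev vs" "rev us"]) simp_all
qed

lemma commit_terminated_txns:
  "commit_terminated G \<Longrightarrow> k \<in> txns G \<longleftrightarrow> Commit k \<in> set G"
  by (metis commit_terminated_split in_set_conv_decomp tid.simps(3) tid_in_txns)

definition commit_index :: "('o, 'v) history \<Rightarrow> nat \<Rightarrow> nat" where
  "commit_index G k = (THE c. c < length G \<and> G ! c = Commit k)"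

lemma commit_index:
  assumes "commit_terminated G" "k \<in> txns G"
  shows commit_index_less: "commit_index G k < length G"
    and nth_commit_index: "G ! commit_index G k = Commit k"
    and commit_index_unique: "\<And>i. i < length G \<Longrightarrow> G ! i = Commit k \<Longrightarrow> i = commit_index G k"
    and le_commit_index: "\<And>i. i < length G \<Longrightarrow> tid (G ! i) = k \<Longrightarrow> i \<le> commit_index G k"
proof -
  obtain a b where ab: "G = a @ Commit k # b" "Commit k \<notin> set a" "\<forall>e\<in>set b. tid e \<noteq> k"
    using commit_terminated_split[OF assms] .
  have after: "tid (G ! i) \<noteq> k" if "length a < i" "i < length G" for i
    using that ab by (auto simp: nth_append nth_Cons' split: if_splits)
  have unique: "i = length a" if "i < length G" "G ! i = Commit k" for i
  proof -
    have "\<not> i < length a" using that ab(1,2) by (metis nth_append_left nth_mem)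
    moreover have "\<not> length a < i" using after[OF _ that(1)] that(2) by auto
    ultimately show ?thesis by simp
  qed
  have idx: "commit_index G k = length a"
    unfolding commit_index_def using unique ab(1) by (intro the_equality) auto
  show "commit_index G k < length G" "G ! commit_index G k = Commit k"
    using ab(1) idx by simp_all
  show "\<And>i. i < length G \<Longrightarrow> G ! i = Commit k \<Longrightarrow> i = commit_index G k"
    using unique idx by simp
  show "\<And>i. i < length G \<Longrightarrow> tid (G ! i) = k \<Longrightarrow> i \<le> commit_index G k"
    using after idx by (metis not_le)
qed

lemma equivalent_set_eq:
  assumes "equivalent S G" shows "set S = set G"
proof -
  have "e \<in> set (filter (\<lambda>e'. tid e' = tid e) S) \<longleftrightarrow> e \<in> set (filter (\<lambda>e'. tid e' = tid e) G)" for e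
    using assms unfolding equivalent_def by simp
  then have "e \<in> set S \<longleftrightarrow> e \<in> set G" for e by simp
  then show ?thesis by blast
qed

lemma equivalent_txns: "equivalent S G \<Longrightarrow> txns S = txns G"
  unfolding txns_def by (simp add: equivalent_set_eq)

lemma equivalent_commit_terminated:
  assumes "equivalent S G" "commit_terminated G" shows "commit_terminated S"
  using assms unfolding commit_terminated_def equivalent_txns[OF assms(1)]
  by (simp add: equivalent_def)

lemma sort_key_tid_equivalent:
  assumes "inj f"
  shows "equivalent (sort_key (\<lambda>e. f (tid e)) G) G"
  unfolding equivalent_def
proof
  fix k
  have same_key: "filter (\<lambda>e. tid e = k) H = filter (\<lambda>e. f (tid e) = f k) H" for H :: "('o, 'v) history"
    by (simp add: inj_eq[OF assms])
  show "filter (\<lambda>e. tid e = k) (sort_key (\<lambda>e. f (tid e)) G) = filter (\<lambda>e. tid e = k) G"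
    unfolding same_key by (rule sort_key_stable)
qed

lemma sort_key_tid_t_sequential:
  assumes "inj f"
  shows "t_sequential (sort_key (\<lambda>e. f (tid e)) G)" (is "t_sequential ?S")
  unfolding t_sequential_def
proof (intro allI impI)
  fix i j k assume ijk: "i < j \<and> j < k \<and> k < length ?S \<and> tid (?S ! i) = tid (?S ! k)"
  have sorted: "sorted (map (\<lambda>e. f (tid e)) ?S)" by simp
  have "f (tid (?S ! i)) \<le> f (tid (?S ! j))"
    using ijk sorted_nth_mono[OF sorted, of i j] by simp
  moreover have "f (tid (?S ! j)) \<le> f (tid (?S ! k))"
    using ijk sorted_nth_mono[OF sorted, of j k] by simp
  ultimately have "f (tid (?S ! j)) = f (tid (?S ! i))"
    using ijk by (simp add: order_antisym)
  then show "tid (?S ! j) = tid (?S ! i)"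
    by (rule injD[OF assms])
qed

lemma completion_commit_terminated:
  assumes "commit_terminated G" shows "completion G = G"
proof -
  have "live G = {}"
    unfolding live_def committed_def using commit_terminated_txns[OF assms] by auto
  then have "completion G = concat (map (\<lambda>i. [G ! i]) [0..<length G])"
    unfolding completion_def by (intro arg_cong[where f = concat] map_cong) auto
  then show ?thesis by (simp add: map_nth)
qed

lemma commits_before_start_rt:
  assumes "commit_terminated G" "commits_before_start G a b"
  shows "rt G a b"
proof -
  obtain c where b: "b \<in> txns G" and c: "c < length G" "G ! c = Commit a"
    and after: "\<forall>n<length G. tid (G ! n) = b \<longrightarrow> c < n"
    using assms(2) unfolding commits_before_start_def by blast
  have a: "a \<in> txns G" using c by (metis nth_mem tid.simps(3) tid_in_txns)
  then have "c = commit_index G a" using c commit_index_unique[OF assms(1)] by blast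
  then have "\<forall>i<length G. tid (G ! i) = a \<longrightarrow> i \<le> c"
    using le_commit_index[OF assms(1) a] by blast
  moreover have "Commit a \<in> set G" using c by (metis nth_mem)
  ultimately show ?thesis
    using b after unfolding rt_def complete_txns_def committed_def by (auto intro: le_less_trans)
qed

lemma complete_txns_subset_txns: "complete_txns G \<subseteq> txns G"
  unfolding complete_txns_def committed_def aborted_def txns_def by force

lemma version_order_total:
  assumes "version_order G vo" "a \<in> versions G x" "b \<in> versions G x" "a \<noteq> b"
  shows "((x, a), (x, b)) \<in> vo \<or> ((x, b), (x, a)) \<in> vo"
  using assms unfolding version_order_def strict_linear_order_on_def total_on_def by blast

lemma valid_read_source:
  assumes "valid G" "Read k x (Some v) \<in> set G"
  obtains t where "Commit t \<in> set G" "Write t x v \<in> set G"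
proof -
  obtain i where "i < length G" "G ! i = Read k x (Some v)"
    using assms(2) by (metis in_set_conv_nth)
  with assms(1) show thesis
    unfolding valid_def valid_read_def using that by (metis nth_mem order.strict_trans)
qed

section \<open>From opacity to an acyclic opacity graph\<close>

locale serialization =
  fixes G S :: "('o, 'v) history"
  assumes commit_terminated: "commit_terminated G"
    and unique_writers: "unique_writers G"
    and legal: "legal S"
    and t_sequential: "t_sequential S"
    and equivalent: "equivalent S G"
    and rt_preserved: "\<And>k m. rt G k m \<Longrightarrow> rt S k m"
begin

lemma set_S: "set S = set G"
  using equivalent by (rule equivalent_set_eq)

lemma txns_S: "txns S = txns G"
  using equivalent by (rule equivalent_txns)

lemmas commit_index_S = commit_index[OF equivalent_commit_terminated[OF equivalent commit_terminated],
  unfolded txns_S]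

lemma read_before_commit:
  assumes "q < length S" "S ! q = Read k x (Some v)"
  shows "q < commit_index S k"
proof -
  have k: "k \<in> txns G" using assms set_S by (metis nth_mem tid.simps(1) tid_in_txns)
  then show ?thesis
    using commit_index_S[OF k] assms by (metis event.distinct(3) le_neq_implies_less tid.simps(1))
qed

lemma read_after_commit_of_writer:
  assumes "q < length S" "S ! q = Read k x (Some v)" "Write j x v \<in> set G"
  shows "commit_index S j < q"
    and "\<And>c. commit_index S j < c \<Longrightarrow> c < q \<Longrightarrow> \<not> (\<exists>t. S ! c = Commit t \<and> writes_obj S t x)"
proof -
  obtain c t where c: "c < q" "S ! c = Commit t" "Write t x v \<in> set S"
    and between: "\<forall>c'. c < c' \<and> c' < q \<longrightarrow> \<not> (\<exists>t'. S ! c' = Commit t' \<and> writes_obj S t' x)"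
    using legal assms(1,2) unfolding legal_def legal_read_def by blast
  have "t = j" using unique_writers c(3) assms(3) set_S unfolding unique_writers_def by blast
  moreover have "j \<in> txns G" using assms(3) by (metis tid.simps(2) tid_in_txns)
  ultimately have "c = commit_index S j" using commit_index_S c assms(1) by simp
  then show "commit_index S j < q"
    and "\<And>c'. commit_index S j < c' \<Longrightarrow> c' < q \<Longrightarrow> \<not> (\<exists>t. S ! c' = Commit t \<and> writes_obj S t x)"
    using c between by auto
qed

definition commit_order :: "(('o \<times> nat) \<times> ('o \<times> nat)) set" where
  "commit_order = {((x, a), (y, b)). x = y \<and> a \<in> versions G x \<and> b \<in> versions G x \<and>
     commit_index S a < commit_index S b}"

lemma versions_txns: "a \<in> versions G x \<Longrightarrow> a \<in> txns G"
  unfolding versions_def committed_def by (metis mem_Collect_eq tid.simps(3) tid_in_txns)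

lemma version_order_commit_order: "version_order G commit_order"
  unfolding version_order_def strict_linear_order_on_def
proof (intro conjI allI)
  fix x
  show "total_on (versions G x) {(i, j). ((x, i), x, j) \<in> commit_order}"
  proof (unfold total_on_def, intro ballI impI)
    fix a b assume ab: "a \<in> versions G x" "b \<in> versions G x" "a \<noteq> b"
    then have "commit_index S a \<noteq> commit_index S b"
      using commit_index_S(2)[OF versions_txns] by (metis event.inject(3))
    with ab show "(a, b) \<in> {(i, j). ((x, i), x, j) \<in> commit_order} \<or>
        (b, a) \<in> {(i, j). ((x, i), x, j) \<in> commit_order}"
      unfolding commit_order_def by auto
  qed
qed (auto simp: commit_order_def trans_def irrefl_def)

lemma commit_index_less_if_commits_before_start:
  assumes "commits_before_start G a b"
  shows "commit_index S a < commit_index S b"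
proof -
  have "rt S a b" using rt_preserved commits_before_start_rt[OF commit_terminated assms] .
  moreover have "a \<in> txns G" "b \<in> txns G"
    using assms unfolding commits_before_start_def by (metis nth_mem tid.simps(3) tid_in_txns)+
  ultimately show ?thesis
    unfolding rt_def using commit_index_S by (metis tid.simps(3))
qed

lemma commit_index_less_if_reads_from:
  assumes "reads_from G a b x"
  shows "commit_index S a < commit_index S b"
proof -
  obtain v where r: "Read b x (Some v) \<in> set S" and w: "Write a x v \<in> set G"
    using assms set_S unfolding reads_from_def by blast
  then obtain q where "q < length S" "S ! q = Read b x (Some v)"
    by (metis in_set_conv_nth)
  with w show ?thesis
    using read_before_commit read_after_commit_of_writer(1) by (meson order.strict_trans)
qed

lemma commit_index_less_if_overwritten:
  assumes r: "Read k x (Some v) \<in> set G" and w: "Write j x v \<in> set G"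
    and i: "i \<in> committed G" "Write i x v' \<in> set G" "i \<noteq> k"
    and ji: "commit_index S j < commit_index S i"
  shows "commit_index S k < commit_index S i"
proof -
  \<comment> \<open>By legality the read of k lies between the commits of j and i in S, and by
    t-sequentiality the commit of k cannot lie beyond the commit of i.\<close>
  obtain q where q: "q < length S" "S ! q = Read k x (Some v)"
    using r set_S by (metis in_set_conv_nth)
  have it: "i \<in> txns G"
    using i(1) unfolding committed_def by (metis mem_Collect_eq tid.simps(3) tid_in_txns)
  have kt: "k \<in> txns G"
    using r by (metis tid.simps(1) tid_in_txns)
  have "writes_obj S i x" using i(2) set_S unfolding writes_obj_def by blast
  then have "\<not> commit_index S i < q"
    using read_after_commit_of_writer(2)[OF q w ji] commit_index_S(2)[OF it] by blast
  moreover have "commit_index S i \<noteq> q" using q(2) commit_index_S(2)[OF it] by auto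
  ultimately have qi: "q < commit_index S i" by simp
  have "\<not> commit_index S i < commit_index S k"
  proof
    assume "commit_index S i < commit_index S k"
    with qi have "tid (S ! commit_index S i) = tid (S ! q)"
      using t_sequential[unfolded t_sequential_def, rule_format, of q "commit_index S i" "commit_index S k"]
        q commit_index_S(1,2)[OF kt] by simp
    with q(2) commit_index_S(2)[OF it] i(3) show False by simp
  qed
  moreover have "commit_index S i \<noteq> commit_index S k"
    using commit_index_S(2)[OF it] commit_index_S(2)[OF kt] i(3) by (metis event.inject(3))
  ultimately show ?thesis by simp
qed

lemma opg_commit_index_less:
  "(a, b) \<in> opg G commit_order \<Longrightarrow> commit_index S a < commit_index S b"
  unfolding opg_def
proof (elim UnE CollectE case_prodE; clarify)
  show "commits_before_start G a b \<Longrightarrow> commit_index S a < commit_index S b"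
    by (rule commit_index_less_if_commits_before_start)
  show "reads_from G a b x \<Longrightarrow> commit_index S a < commit_index S b" for x
    by (rule commit_index_less_if_reads_from)
  show "((x, a), x, b) \<in> commit_order \<Longrightarrow> commit_index S a < commit_index S b" for x
    unfolding commit_order_def by simp
  show "commit_index S a < commit_index S b"
    if "Read a x (Some v) \<in> set G" "Write j x v \<in> set G" "b \<in> committed G"
      "Write b x v' \<in> set G" "b \<noteq> a" "((x, j), x, b) \<in> commit_order" for j x v v'
    using that(6) unfolding commit_order_def
    by (auto intro: commit_index_less_if_overwritten[OF that(1-5)])
qed

end

lemma acyclic_opg_if_opaque:
  assumes "commit_terminated G" "unique_writers G" "opaque G"
  shows "\<exists>vo. version_order G vo \<and> acyclic (opg G vo)"
proof -
  obtain S where "legal S" "t_sequential S" "equivalent S G" "\<And>k m. rt G k m \<Longrightarrow> rt S k m"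
    using assms(3) unfolding opaque_def completion_commit_terminated[OF assms(1)] by blast
  with assms(1,2) interpret serialization G S
    by unfold_locales
  have "acyclic (opg G commit_order)"
    by (rule acyclic_if_monotone[where f = "commit_index S"]) (rule opg_commit_index_less)
  with version_order_commit_order show ?thesis by blast
qed

section \<open>From an acyclic opacity graph to opacity\<close>

locale acyclic_opg =
  fixes G :: "('o, 'v) history" and vo :: "(('o \<times> nat) \<times> ('o \<times> nat)) set"
  assumes commit_terminated: "commit_terminated G"
    and unique_writers: "unique_writers G"
    and valid: "valid G"
    and version_order: "version_order G vo"
    and acyclic: "acyclic (opg G vo)"
begin

definition rank :: "nat \<Rightarrow> nat" where
  "rank k = card {c \<in> txns G. (c, k) \<in> (opg G vo)\<^sup>+}"

definition serial :: "('o, 'v) history" where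
  "serial = sort_key (\<lambda>e. (rank (tid e), tid e)) G"

lemma rank_less: "(a, b) \<in> opg G vo \<Longrightarrow> a \<in> txns G \<Longrightarrow> rank a < rank b"
  unfolding rank_def using card_trancl_predecessors_less[OF _ acyclic] by (simp add: txns_def)

lemma serial_equivalent: "equivalent serial G"
  unfolding serial_def by (rule sort_key_tid_equivalent) (simp add: inj_def)

lemma serial_t_sequential: "t_sequential serial"
  unfolding serial_def by (rule sort_key_tid_t_sequential) (simp add: inj_def)

lemma set_serial: "set serial = set G"
  using serial_equivalent by (rule equivalent_set_eq)

lemma txns_serial: "txns serial = txns G"
  using serial_equivalent by (rule equivalent_txns)

lemmas commit_index_serial =
  commit_index[OF equivalent_commit_terminated[OF serial_equivalent commit_terminated], unfolded txns_serial]

lemma serial_respects_opg: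
  assumes "i < length serial" "j < length serial" "(tid (serial ! i), tid (serial ! j)) \<in> opg G vo"
  shows "i < j"
proof (rule sorted_map_nth_less_imp_less[where f = "\<lambda>e. (rank (tid e), tid e)"])
  show "sorted (map (\<lambda>e. (rank (tid e), tid e)) serial)" unfolding serial_def by simp
  have "tid (serial ! i) \<in> txns G" using assms(1) set_serial by (metis nth_mem tid_in_txns)
  then show "(rank (tid (serial ! i)), tid (serial ! i)) < (rank (tid (serial ! j)), tid (serial ! j))"
    using rank_less assms(3) by simp
qed fact

lemma rt_serial:
  assumes "rt G k m" shows "rt serial k m"
proof -
  have k: "k \<in> txns G" and m: "m \<in> txns G"
    and before: "\<forall>i<length G. \<forall>j<length G. tid (G ! i) = k \<longrightarrow> tid (G ! j) = m \<longrightarrow> i < j"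
    using assms complete_txns_subset_txns unfolding rt_def by blast+
  have "commits_before_start G k m"
    unfolding commits_before_start_def using m before commit_index[OF commit_terminated k]
    by (metis tid.simps(3))
  then have "(k, m) \<in> opg G vo" unfolding opg_def by blast
  moreover have "Commit k \<in> set serial"
    using k commit_terminated set_serial by (simp add: commit_terminated_txns)
  ultimately show ?thesis
    unfolding rt_def complete_txns_def committed_def txns_serial
    using m serial_respects_opg by auto
qed

lemma no_overwrite_between:
  assumes q: "q < length serial" "serial ! q = Read k x (Some v)"
    and t: "Commit t \<in> set G" "Write t x v \<in> set G"
    and c: "commit_index serial t < c" "c < q" "serial ! c = Commit t'"
    and t': "Write t' x w \<in> set G"
  shows False
proof -
  have tk: "t \<in> txns G" "k \<in> txns G"
    using t(1) q set_serial by (metis nth_mem tid.simps tid_in_txns)+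
  have cl: "c < length serial" using c q by simp
  have t'c: "t' \<in> committed G"
    using c(3) cl set_serial unfolding committed_def by (metis mem_Collect_eq nth_mem)
  then have t't: "t' \<in> txns G" unfolding committed_def by (metis mem_Collect_eq tid.simps(3) tid_in_txns)
  have "t' \<noteq> t" using commit_index_serial(3)[OF tk(1) cl] c by auto
  have "t' \<noteq> k" using commit_index_serial(3,4)[OF tk(2)] c q cl by fastforce
  have "w \<noteq> v" using unique_writers t(2) t' \<open>t' \<noteq> t\<close> unfolding unique_writers_def by blast
  have r: "Read k x (Some v) \<in> set G" using q set_serial by (metis nth_mem)
  have "t \<in> versions G x" "t' \<in> versions G x"
    using t t' t'c unfolding versions_def writes_obj_def committed_def by blast+
  \<comment> \<open>Either way round, the version order yields a multiversion edge that points backwards in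
    the serialization.\<close>
  then consider "((x, t), (x, t')) \<in> vo" | "((x, t'), (x, t)) \<in> vo"
    using version_order_total[OF version_order] \<open>t' \<noteq> t\<close> by blast
  then show False
  proof cases
    case 1
    then have "(k, t') \<in> opg G vo"
      unfolding opg_def using r t(2) t'c t' \<open>w \<noteq> v\<close> \<open>t' \<noteq> t\<close> \<open>t' \<noteq> k\<close> by blast
    then have "q < c" using serial_respects_opg q cl c(3) by simp
    with c(2) show False by simp
  next
    case 2
    then have "(t', t) \<in> opg G vo"
      unfolding opg_def using r t(2) t'c t' \<open>w \<noteq> v\<close> \<open>t' \<noteq> t\<close> \<open>t' \<noteq> k\<close> by blast
    then have "c < commit_index serial t"
      using serial_respects_opg cl commit_index_serial(1,2)[OF tk(1)] c(3) by simp
    with c(1) show False by simp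
  qed
qed

lemma legal_serial: "legal serial"
  unfolding legal_def legal_read_def
proof (intro allI impI)
  fix q k x v assume q: "q < length serial" "serial ! q = Read k x (Some v)"
  then have r: "Read k x (Some v) \<in> set G" using set_serial by (metis nth_mem)
  then obtain t where t: "Commit t \<in> set G" "Write t x v \<in> set G"
    using valid_read_source[OF valid] by blast
  have tt: "t \<in> txns G" using t(1) by (metis tid.simps(3) tid_in_txns)
  have "(t, k) \<in> opg G vo" unfolding opg_def reads_from_def using r t(2) by blast
  then have "commit_index serial t < q"
    using serial_respects_opg commit_index_serial(1,2)[OF tt] q by simp
  moreover have "\<forall>c. commit_index serial t < c \<and> c < q \<longrightarrow>
      \<not> (\<exists>t'. serial ! c = Commit t' \<and> writes_obj serial t' x)"
    using no_overwrite_between[OF q t] set_serial unfolding writes_obj_def by blast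
  moreover have "writes_obj serial t x" "Write t x v \<in> set serial"
    using t(2) set_serial unfolding writes_obj_def by auto
  ultimately show "\<exists>c<q. \<exists>t. serial ! c = Commit t \<and> writes_obj serial t x \<and> Write t x v \<in> set serial \<and>
      (\<forall>c'. c < c' \<and> c' < q \<longrightarrow> \<not> (\<exists>t'. serial ! c' = Commit t' \<and> writes_obj serial t' x))"
    using commit_index_serial(2)[OF tt] by blast
qed

end

lemma opaque_if_acyclic_opg:
  assumes "commit_terminated G" "unique_writers G" "valid G" "version_order G vo" "acyclic (opg G vo)"
  shows "opaque G"
proof -
  interpret acyclic_opg G vo using assms by unfold_locales
  show ?thesis
    unfolding opaque_def completion_commit_terminated[OF assms(1)]
    using assms(3) legal_serial serial_t_sequential serial_equivalent rt_serial by blast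
qed

lemma opaque_iff_acyclic_opg:
  assumes "commit_terminated G" "unique_writers G" "valid G"
  shows "opaque G \<longleftrightarrow> (\<exists>vo. version_order G vo \<and> acyclic (opg G vo))"
  using assms acyclic_opg_if_opaque opaque_if_acyclic_opg by blast

lemma valid_iff:
  "valid G \<longleftrightarrow>
     (\<forall>A k x v B. G = A @ Read k x (Some v) # B \<longrightarrow> (\<exists>t. Commit t \<in> set A \<and> Write t x v \<in> set G))"
proof
  assume valid: "valid G"
  show "\<forall>A k x v B. G = A @ Read k x (Some v) # B \<longrightarrow> (\<exists>t. Commit t \<in> set A \<and> Write t x v \<in> set G)"
  proof (intro allI impI)
    fix A k x v B assume G: "G = A @ Read k x (Some v) # B"
    then have "valid_read G (length A)" using valid unfolding valid_def by simp
    then obtain j t where "j < length A" "G ! j = Commit t" "Write t x v \<in> set G"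
      using G unfolding valid_read_def by auto
    then show "\<exists>t. Commit t \<in> set A \<and> Write t x v \<in> set G"
      using G by (metis nth_append_left nth_mem)
  qed
next
  assume reads: "\<forall>A k x v B. G = A @ Read k x (Some v) # B \<longrightarrow> (\<exists>t. Commit t \<in> set A \<and> Write t x v \<in> set G)"
  show "valid G"
    unfolding valid_def valid_read_def
  proof (intro allI impI)
    fix i k x v assume "i < length G" "G ! i = Read k x (Some v)"
    then have "G = take i G @ Read k x (Some v) # drop (Suc i) G" by (metis id_take_nth_drop)
    with reads obtain t where c: "Commit t \<in> set (take i G)" and w: "Write t x v \<in> set G" by blast
    from c obtain j where "j < length (take i G)" "take i G ! j = Commit t"
      unfolding in_set_conv_nth by blast
    with w show "\<exists>j<i. \<exists>t. G ! j = Commit t \<and> Write t x v \<in> set G" by auto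
  qed
qed

lemma valid_filter:
  assumes "valid G"
    and "\<And>A r B t. G = A @ r # B \<Longrightarrow> P r \<Longrightarrow> Commit t \<in> set A \<Longrightarrow> P (Commit t) \<and> (\<forall>x w. P (Write t x w))"
  shows "valid (filter P G)"
  unfolding valid_iff
proof (intro allI impI)
  fix A' k x v B' assume "filter P G = A' @ Read k x (Some v) # B'"
  then obtain A B where G: "G = A @ Read k x (Some v) # B" and A: "filter P A = A'" and P: "P (Read k x (Some v))"
    by (blast dest: filter_eq_append_ConsD)
  then obtain t where c: "Commit t \<in> set A" and w: "Write t x v \<in> set G"
    using assms(1) unfolding valid_iff by blast
  have "P (Commit t)" "P (Write t x v)" using assms(2)[OF G P c] by auto
  with c w A show "\<exists>t. Commit t \<in> set A' \<and> Write t x v \<in> set (filter P G)"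
    by auto
qed

lemma valid_insert_commit:
  assumes "valid (xs @ ys)" shows "valid (xs @ Commit c # ys)"
  unfolding valid_iff
proof (intro allI impI)
  fix A k x v B assume split: "xs @ Commit c # ys = A @ Read k x (Some v) # B"
  have "\<exists>A0 B0. xs @ ys = A0 @ Read k x (Some v) # B0 \<and> set A0 \<subseteq> set A"
  proof (cases "length A < length xs")
    case True
    with split obtain us where "xs = A @ Read k x (Some v) # us"
      by (auto simp: append_eq_append_conv2 Cons_eq_append_conv append_eq_Cons_conv)
    then show ?thesis by auto
  next
    case False
    with split obtain us where "A = xs @ Commit c # us" "ys = us @ Read k x (Some v) # B"
      by (auto simp: append_eq_append_conv2 Cons_eq_append_conv append_eq_Cons_conv)
    then have "xs @ ys = (xs @ us) @ Read k x (Some v) # B \<and> set (xs @ us) \<subseteq> set A" by auto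
    then show ?thesis by blast
  qed
  then obtain A0 B0 where "xs @ ys = A0 @ Read k x (Some v) # B0" "set A0 \<subseteq> set A" by blast
  with assms obtain t where "Commit t \<in> set A" "Write t x v \<in> set (xs @ ys)"
    unfolding valid_iff by blast
  then show "\<exists>t. Commit t \<in> set A \<and> Write t x v \<in> set (xs @ Commit c # ys)" by auto
qed

lemma well_formed_le_terminal:
  assumes "well_formed H" "i < length H" "j < length H" "terminal (H ! j)" "tid (H ! i) = tid (H ! j)"
  shows "i \<le> j"
  using assms unfolding well_formed_def by (metis not_le)

lemma well_formed_commit_last:
  assumes "well_formed H" "Commit k \<in> set H"
  shows "\<exists>ys. filter (\<lambda>e. tid e = k) H = ys @ [Commit k] \<and> Commit k \<notin> set ys"
proof -
  obtain c where c: "c < length H" "H ! c = Commit k" using assms(2) by (metis in_set_conv_nth)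
  have after: "filter (\<lambda>e. tid e = k) (drop (Suc c) H) = []"
  proof (rule filter_False, rule ballI)
    fix e assume "e \<in> set (drop (Suc c) H)"
    then obtain m where "m < length (drop (Suc c) H)" "drop (Suc c) H ! m = e"
      unfolding in_set_conv_nth by blast
    then have "Suc c + m < length H" "H ! (Suc c + m) = e" by auto
    then show "tid e \<noteq> k"
      using well_formed_le_terminal[OF assms(1), of "Suc c + m" c] c by auto
  qed
  have "Commit k \<notin> set (take c H)"
  proof
    assume "Commit k \<in> set (take c H)"
    then obtain m where "m < c" "H ! m = Commit k" by (auto simp: in_set_conv_nth)
    then show False using well_formed_le_terminal[OF assms(1), of c m] c by auto
  qed
  moreover have "filter (\<lambda>e. tid e = k) H = filter (\<lambda>e. tid e = k) (take c H) @ [Commit k]"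
    using after c by (subst id_take_nth_drop[OF c(1)]) simp
  ultimately show ?thesis by auto
qed

lemma commit_terminated_filter:
  assumes "well_formed H" "\<And>e. e \<in> set H \<Longrightarrow> P e \<Longrightarrow> Commit (tid e) \<in> set H"
    and "\<And>e e'. e \<in> set H \<Longrightarrow> e' \<in> set H \<Longrightarrow> tid e = tid e' \<Longrightarrow> P e = P e'"
  shows "commit_terminated (filter P H)"
  unfolding commit_terminated_def
proof
  fix k assume "k \<in> txns (filter P H)"
  then obtain e where e: "e \<in> set H" "P e" "tid e = k" unfolding txns_def by auto
  then have "filter (\<lambda>e. tid e = k) (filter P H) = filter (\<lambda>e. tid e = k) H"
    unfolding filter_filter by (intro filter_cong) (use assms(3)[of _ e] e in auto)
  with well_formed_commit_last[OF assms(1) assms(2)[OF e(1,2)]] e(3)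
  show "\<exists>ys. filter (\<lambda>e. tid e = k) (filter P H) = ys @ [Commit k] \<and> Commit k \<notin> set ys"
    by simp
qed

lemma aborting_terminal: "aborting e \<Longrightarrow> terminal e \<and> \<not> successful_op e"
  by (cases e rule: aborting.cases) auto

lemma aborted_not_committed:
  assumes "well_formed H" "t \<in> aborted H"
  shows "Commit t \<notin> set H"
proof
  assume "Commit t \<in> set H"
  then obtain c where c: "c < length H" "H ! c = Commit t" by (metis in_set_conv_nth)
  obtain e where e: "e \<in> set H" "aborting e" "tid e = t"
    using assms(2) unfolding aborted_def by blast
  then obtain p where p: "p < length H" "aborting (H ! p)" "tid (H ! p) = t"
    unfolding in_set_conv_nth by blast
  have "terminal (H ! p)" using aborting_terminal[OF p(2)] ..
  then have "c \<le> p" using well_formed_le_terminal[OF assms(1) c(1) p(1)] c p by simp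
  moreover have "p \<le> c" using well_formed_le_terminal[OF assms(1) p(1) c(1)] c p by simp
  ultimately have "p = c" by simp
  with c p show False by simp
qed

lemma unique_writes_unique_writers: "unique_writes H \<Longrightarrow> unique_writers H"
  unfolding unique_writes_def unique_writers_def in_set_conv_nth by (metis event.inject(2))

lemma unique_writers_mono:
  assumes "unique_writers G" "\<And>a x v. Write a x v \<in> set G' \<Longrightarrow> Write a x v \<in> set G"
  shows "unique_writers G'"
  using assms unfolding unique_writers_def by blast

section \<open>The sub-histories of shSet\<close>

lemma sh_committed_commit_terminated:
  "well_formed H \<Longrightarrow> commit_terminated (sh_committed H)"
  unfolding sh_committed_def subhistory_def
  by (rule commit_terminated_filter) (auto simp: committed_def)

lemma sh_committed_valid:
  "valid H \<Longrightarrow> valid (sh_committed H)"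
  unfolding sh_committed_def subhistory_def
  by (rule valid_filter) (auto simp: committed_def)

lemma commit_idx_before_iff:
  assumes "p \<le> length H"
  shows "k \<in> commit_idx_before H p \<longleftrightarrow> Commit k \<in> set (take p H)"
proof
  assume "k \<in> commit_idx_before H p"
  then obtain j where "j < p" "H ! j = Commit k" unfolding commit_idx_before_def by blast
  with assms have "j < length (take p H)" "take p H ! j = Commit k" by simp_all
  then show "Commit k \<in> set (take p H)" by (metis nth_mem)
next
  assume "Commit k \<in> set (take p H)"
  then obtain j where "j < length (take p H)" "take p H ! j = Commit k"
    unfolding in_set_conv_nth by blast
  then show "k \<in> commit_idx_before H p" unfolding commit_idx_before_def by auto
qed

lemma le_last_succ_op:
  assumes "last_succ_op H t n" "i < length H" "tid (H ! i) = t" "successful_op (H ! i)"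
  shows "i \<le> n"
proof (rule ccontr)
  assume "\<not> i \<le> n"
  with assms show False unfolding last_succ_op_def by auto
qed

lemma last_succ_op_unique:
  assumes "last_succ_op H t n" "last_succ_op H t m" shows "m = n"
proof -
  have "m \<le> n" using le_last_succ_op[OF assms(1)] assms(2) unfolding last_succ_op_def by blast
  moreover have "n \<le> m" using le_last_succ_op[OF assms(2)] assms(1) unfolding last_succ_op_def by blast
  ultimately show ?thesis by simp
qed

lemma last_succ_op_exists:
  assumes "i < length H" "tid (H ! i) = t" "successful_op (H ! i)"
  shows "\<exists>n. last_succ_op H t n"
proof -
  define N where "N = {n. n < length H \<and> tid (H ! n) = t \<and> successful_op (H ! n)}"
  define n where "n = Max N"
  have "finite N" "i \<in> N" using assms unfolding N_def by auto
  then have "n \<in> N" and le_n: "\<And>m. m \<in> N \<Longrightarrow> m \<le> n" unfolding n_def by (auto intro: Max_in)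
  then have "n < length H" "tid (H ! n) = t" "successful_op (H ! n)" unfolding N_def by auto
  moreover have "\<not> (tid (H ! m) = t \<and> successful_op (H ! m))" if "n < m" "m < length H" for m
    using le_n[of m] that unfolding N_def by auto
  ultimately have "last_succ_op H t n" unfolding last_succ_op_def by blast
  then show ?thesis ..
qed

locale aborted_txn =
  fixes H :: "('o, 'v) history" and t :: nat
  assumes well_formed: "well_formed H" and aborted: "t \<in> aborted H"
begin

(* The events of sh_aborted H t other than the commit of t inserted after its last successful
   operation. *)

definition kept :: "('o, 'v) event \<Rightarrow> bool" where
  "kept e \<longleftrightarrow> tid e \<in> commit_idx_before H (idx_of_abort H t) \<or> (tid e = t \<and> successful_op e)"

lemma idx_of_abort:
  shows idx_of_abort_less: "idx_of_abort H t < length H"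
    and aborting_idx_of_abort: "aborting (H ! idx_of_abort H t)"
    and tid_idx_of_abort: "tid (H ! idx_of_abort H t) = t"
proof -
  obtain e where "e \<in> set H" "aborting e" "tid e = t"
    using aborted unfolding aborted_def by blast
  then have "\<exists>p. p < length H \<and> aborting (H ! p) \<and> tid (H ! p) = t"
    unfolding in_set_conv_nth by blast
  then have "idx_of_abort H t < length H \<and> aborting (H ! idx_of_abort H t) \<and>
      tid (H ! idx_of_abort H t) = t"
    unfolding idx_of_abort_def by (rule LeastI_ex)
  then show "idx_of_abort H t < length H" "aborting (H ! idx_of_abort H t)"
      "tid (H ! idx_of_abort H t) = t"
    by simp_all
qed

lemma commit_idx_before_abort_iff:
  "k \<in> commit_idx_before H (idx_of_abort H t) \<longleftrightarrow> Commit k \<in> set (take (idx_of_abort H t) H)"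
  using idx_of_abort_less by (intro commit_idx_before_iff) simp

lemma not_committed_before: "t \<notin> commit_idx_before H (idx_of_abort H t)"
  unfolding commit_idx_before_abort_iff
  using aborted_not_committed[OF well_formed aborted] in_set_takeD by fast

lemma kept_before_abort:
  assumes "i < length H" "kept (H ! i)"
  shows "i < idx_of_abort H t"
proof (cases "tid (H ! i) \<in> commit_idx_before H (idx_of_abort H t)")
  case True
  then obtain j where j: "j < idx_of_abort H t" "H ! j = Commit (tid (H ! i))"
    by (auto simp: commit_idx_before_def)
  have "j < length H" using j(1) idx_of_abort_less by simp
  with j(2) have "i \<le> j" using well_formed_le_terminal[OF well_formed assms(1)] by simp
  with j(1) show ?thesis by simp
next
  case False
  with assms(2) have "tid (H ! i) = t" "successful_op (H ! i)" unfolding kept_def by simp_all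
  moreover note aborting_terminal[OF aborting_idx_of_abort]
  ultimately have "i \<le> idx_of_abort H t" "i \<noteq> idx_of_abort H t"
    using well_formed_le_terminal[OF well_formed assms(1) idx_of_abort_less] tid_idx_of_abort
    by metis+
  then show ?thesis by simp
qed

lemma valid_filter_kept:
  assumes "valid H" shows "valid (filter kept H)"
proof (rule valid_filter[OF assms])
  fix A r B t' assume H: "H = A @ r # B" and r: "kept r" and c: "Commit t' \<in> set A"
  have "length A < idx_of_abort H t"
    using kept_before_abort[of "length A"] H r by simp
  moreover have "A = take (length A) H" using H by simp
  ultimately have "set A \<subseteq> set (take (idx_of_abort H t) H)"
    by (metis less_imp_le_nat set_take_subset_set_take)
  with c have "t' \<in> commit_idx_before H (idx_of_abort H t)"
    using commit_idx_before_abort_iff by blast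
  then show "kept (Commit t') \<and> (\<forall>x w. kept (Write t' x w))" unfolding kept_def by simp
qed

lemma sh_aborted_cases:
  obtains (no_successful_op) "sh_aborted H t = filter kept H"
      "\<forall>e\<in>set H. \<not> (tid e = t \<and> successful_op e)"
  | (after_last_op) n where "n < length H"
      "sh_aborted H t = filter kept (take (Suc n) H) @ Commit t # filter kept (drop (Suc n) H)"
      "\<forall>e\<in>set (drop (Suc n) H). \<not> (tid e = t \<and> successful_op e)"
proof -
  have sh: "sh_aborted H t = concat (map (\<lambda>n. (if kept (H ! n) then [H ! n] else []) @
      (if last_succ_op H t n then [Commit t] else [])) [0..<length H])"
    unfolding sh_aborted_def kept_def by simp
  show thesis
  proof (cases "\<exists>n. last_succ_op H t n")
    case True
    then obtain n where n: "last_succ_op H t n" ..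
    have "last_succ_op H t m \<longleftrightarrow> m = n" for m
      using n last_succ_op_unique by blast
    then have "sh_aborted H t = concat (map (\<lambda>m. (if kept (H ! m) then [H ! m] else []) @
        (if m = n then [Commit t] else [])) [0..<length H])"
      unfolding sh by simp
    moreover have "n < length H" using n unfolding last_succ_op_def by simp
    ultimately have "sh_aborted H t = filter kept (take (Suc n) H) @ Commit t # filter kept (drop (Suc n) H)"
      using concat_map_nth_insert[where f = "\<lambda>x. if kept x then [x] else []"]
      by (simp add: concat_map_filter_singleton)
    moreover have "\<forall>e\<in>set (drop (Suc n) H). \<not> (tid e = t \<and> successful_op e)"
    proof
      fix e assume "e \<in> set (drop (Suc n) H)"
      then obtain m where "m < length (drop (Suc n) H)" "drop (Suc n) H ! m = e"
        unfolding in_set_conv_nth by blast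
      then have "Suc n + m < length H" "H ! (Suc n + m) = e" by auto
      then show "\<not> (tid e = t \<and> successful_op e)"
        using le_last_succ_op[OF n, of "Suc n + m"] by auto
    qed
    ultimately show thesis using \<open>n < length H\<close> after_last_op by blast
  next
    case False
    then have "sh_aborted H t = filter kept H"
      unfolding sh using concat_map_nth[where f = "\<lambda>x. if kept x then [x] else []"]
      by (simp add: concat_map_filter_singleton)
    moreover have "\<forall>e\<in>set H. \<not> (tid e = t \<and> successful_op e)"
    proof (intro ballI notI)
      fix e assume "e \<in> set H" "tid e = t \<and> successful_op e"
      then obtain i where "i < length H" "tid (H ! i) = t" "successful_op (H ! i)"
        unfolding in_set_conv_nth by blast
      with False last_succ_op_exists show False by blast
    qed
    ultimately show thesis by (rule no_successful_op)
  qed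
qed

lemma filter_kept_other:
  assumes "k \<noteq> t"
  shows "filter (\<lambda>e. tid e = k) (filter kept H) =
    (if k \<in> commit_idx_before H (idx_of_abort H t) then filter (\<lambda>e. tid e = k) H else [])"
  using assms unfolding filter_filter kept_def by (auto intro: filter_cong filter_False)

lemma filter_sh_aborted_other:
  assumes "k \<noteq> t"
  shows "filter (\<lambda>e. tid e = k) (sh_aborted H t) = filter (\<lambda>e. tid e = k) (filter kept H)"
proof (cases rule: sh_aborted_cases)
  case (after_last_op n)
  have "filter kept H = filter kept (take (Suc n) H) @ filter kept (drop (Suc n) H)"
    by (simp flip: filter_append)
  with after_last_op(2) assms show ?thesis by simp
qed simp

lemma sh_aborted_commit_terminated: "commit_terminated (sh_aborted H t)"
  unfolding commit_terminated_def
proof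
  fix k assume "k \<in> txns (sh_aborted H t)"
  then obtain e where e: "e \<in> set (sh_aborted H t)" "tid e = k" unfolding txns_def by auto
  show "\<exists>ys. filter (\<lambda>e. tid e = k) (sh_aborted H t) = ys @ [Commit k] \<and> Commit k \<notin> set ys"
  proof (cases "k = t")
    case False
    with e have "filter (\<lambda>e. tid e = k) (filter kept H) \<noteq> []"
      unfolding filter_sh_aborted_other[OF False, symmetric] filter_empty_conv by blast
    then have k: "k \<in> commit_idx_before H (idx_of_abort H t)"
      unfolding filter_kept_other[OF False] by (metis (full_types))
    then have "Commit k \<in> set H" using commit_idx_before_abort_iff in_set_takeD by fast
    with k False show ?thesis
      using well_formed_commit_last[OF well_formed] filter_sh_aborted_other filter_kept_other by simp
  next
    case True
    have no_commit: "Commit t \<notin> set H" using aborted_not_committed[OF well_formed aborted] .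
    show ?thesis
    proof (cases rule: sh_aborted_cases)
      case no_successful_op
      with e True have "kept e" "e \<in> set H" "tid e = t" by auto
      with no_successful_op(2) not_committed_before show ?thesis unfolding kept_def by blast
    next
      case (after_last_op n)
      have "filter (\<lambda>e. tid e = t) (filter kept (drop (Suc n) H)) = []"
        using after_last_op(3) not_committed_before unfolding kept_def by (auto simp: filter_empty_conv)
      moreover have "Commit t \<notin> set (filter (\<lambda>e. tid e = t) (filter kept (take (Suc n) H)))"
        using no_commit in_set_takeD by fastforce
      ultimately show ?thesis using after_last_op(2) True by simp
    qed
  qed
qed

lemma sh_aborted_valid:
  assumes "valid H" shows "valid (sh_aborted H t)"
proof (cases rule: sh_aborted_cases)
  case no_successful_op
  then show ?thesis using valid_filter_kept[OF assms] by simp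
next
  case (after_last_op n)
  have "valid (filter kept (take (Suc n) H) @ filter kept (drop (Suc n) H))"
    using valid_filter_kept[OF assms] by (simp flip: filter_append)
  then show ?thesis unfolding after_last_op(2) by (rule valid_insert_commit)
qed

lemma set_sh_aborted: "set (sh_aborted H t) \<subseteq> insert (Commit t) (set H)"
proof (cases rule: sh_aborted_cases)
  case (after_last_op n)
  then show ?thesis by (auto dest: in_set_takeD in_set_dropD)
qed auto

end

lemma shSet_commit_terminated_unique_writers_valid:
  assumes "is_history H" "valid H" "sh \<in> shSet H"
  shows "commit_terminated sh \<and> unique_writers sh \<and> valid sh"
proof -
  have wf: "well_formed H" and uw: "unique_writers H"
    using assms(1) unique_writes_unique_writers unfolding is_history_def by auto
  consider t where "t \<in> aborted H" "sh = sh_aborted H t" | "sh = sh_committed H"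
    using assms(3) unfolding shSet_def by blast
  then show ?thesis
  proof cases
    case 1
    then interpret aborted_txn H t using wf by unfold_locales
    have "unique_writers (sh_aborted H t)"
      using set_sh_aborted by (intro unique_writers_mono[OF uw]) auto
    with 1 show ?thesis
      using sh_aborted_commit_terminated sh_aborted_valid[OF assms(2)] by simp
  next
    case 2
    have "unique_writers (sh_committed H)"
      unfolding sh_committed_def subhistory_def by (intro unique_writers_mono[OF uw]) simp
    with 2 show ?thesis
      using sh_committed_commit_terminated[OF wf] sh_committed_valid[OF assms(2)] by simp
  qed
qed

theorem theorem1:
  fixes H :: "('o::finite, 'v::zero) history"
  assumes "is_history H"
    and "valid H"
  shows "locally_opaque H \<longleftrightarrow>
    (\<forall>sh\<in>shSet H. \<exists>vo. version_order sh vo \<and> acyclic (opg sh vo))"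
  unfolding locally_opaque_def
  using opaque_iff_acyclic_opg shSet_commit_terminated_unique_writers_valid[OF assms] by blast

end
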